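(* Assume the setting of Lemma 1: $\mathcal Q=\mathbb{R}^N$ with coordinates $(\lambda^1,\dots,\lambda^k,x^1,\dots,x^{N-k})$, constraints $\hat C_I=\hat p_I-\partial S/\partial\lambda^I$ with $S$ smooth real and $\hat p_I=-i\hbar\partial_{\lambda^I}$, and global gauge conditions $G_K(\lambda,x)=0$ ($K=1,\dots,k$) depending only on configuration variables, having for each $x$ a unique solution $\lambda^K=c^K(x)$ with nonvanishing $\det(\partial G_K/\partial\lambda^I)$. Define the physical inner product of $\psi^{\rm phys}=\prod_I\delta(\hat C_I)\psi^{\rm kin}$ and $\phi^{\rm phys}=\prod_I\delta(\hat C_I)\phi^{\rm kin}$ by $$\langle\psi^{\rm phys}|\phi^{\rm phys}\rangle_{\rm phys}:=\int_{\mathcal Q}d\lambda\,dx\,\big(\psi^{\rm kin}(\lambda,x)\big)^*\prod_{I=1}^k\delta(\hat C_I)\phi^{\rm kin}(\lambda,x).$$ Then $$\langle\psi^{\rm phys}|\phi^{\rm phys}\rangle_{\rm phys}=\int_{\mathcal Q}d\xi(\lambda,x)\,\big(\psi^{\rm phys}(\lambda,x)\big)^*\phi^{\rm phys}(\lambda,x)=(2\pi\hbar)^k\int_{\mathbb{R}^{N-k}}\prod_\alpha dx^\alpha\,\big(\psi^{\rm phys}(\lambda,x)\big)^*\phi^{\rm phys}(\lambda,x),$$ with the regularized (Faddeev–Popov) measure $$d\xi(\lambda,x):=(2\pi)^k\prod_{I,\alpha}d\lambda^I dx^\alpha\,\Big|\det\big([\hat G_K,\hat C_I]\big)\Big|\prod_{K=1}^k\delta\big(G_K(\lambda,x)\big),$$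 where the integrand in the last expression is independent of $\lambda$. The physical inner product is independent of the particular choice of gauge conditions $G_K$.
   Context: $\delta(\hat C):=\frac{1}{2\pi\hbar}\int_{\mathbb{R}}ds\,e^{is\hat C/\hbar}$ (improper group-averaging projector). $[\hat G_K,\hat C_I]=i\hbar\,\partial G_K/\partial\lambda^I$ is a multiplication operator and $\det$ denotes the determinant of the $k\times k$ matrix. Kinematical states lie in $L^2(\mathbb{R}^N,d\lambda\,dx)$ with standard Lebesgue measure, assumed such that all integrals converge; the physical inner product is well defined on equivalence classes of kinematical states having the same image under $\prod_I\delta(\hat C_I)$. *)

theory Defs
  imports "HOL-Analysis.Analysis"
begin

text \<open>Configuration space Q = R^N = R^k x R^(N-k), points (l, x) with
  l :: real^'k (the lambda^I) and x :: real^'m (the x^alpha).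
  Wave functions are maps real^'k => real^'m => complex.\<close>

definition jac :: "(real^'k \<Rightarrow> real^'k) \<Rightarrow> real^'k \<Rightarrow> real^'k^'k" where
  "jac F l = (\<chi> K I. deriv (\<lambda>t. F (l + t *\<^sub>R axis I 1) $ K) 0)"

text \<open>Unitary group generated by the constraints C_I = p_I - dS/dlambda^I,
  p_I = -i hbar d/dlambda^I:  prod_I exp(i s_I C_I / hbar).  Since
  C_I = e^(iS/hbar) p_I e^(-iS/hbar) and exp(i s p/hbar) is translation by s,
  this acts as below.\<close>
definition constr_flow ::
  "(real^'k \<Rightarrow> real^'m \<Rightarrow> real) \<Rightarrow> real \<Rightarrow> real^'k
    \<Rightarrow> (real^'k \<Rightarrow> real^'m \<Rightarrow> complex) \<Rightarrow> real^'k \<Rightarrow> real^'m \<Rightarrow> complex" where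
  "constr_flow S hb s \<psi> l x =
     exp (\<i> * complex_of_real (S l x / hb)) * exp (- \<i> * complex_of_real (S (l + s) x / hb))
       * \<psi> (l + s) x"

text \<open>Group-averaging projector prod_I delta(C_I), with
  delta(C) = 1/(2 pi hbar) int ds exp(i s C/hbar), i.e.
  (2 pi hbar)^(-k) int_{R^k} d^k s prod_I exp(i s_I C_I/hbar).\<close>
definition phys_proj ::
  "(real^'k \<Rightarrow> real^'m \<Rightarrow> real) \<Rightarrow> real
    \<Rightarrow> (real^'k \<Rightarrow> real^'m \<Rightarrow> complex) \<Rightarrow> real^'k \<Rightarrow> real^'m \<Rightarrow> complex" where
  "phys_proj S hb \<psi> l x =
     complex_of_real ((1 / (2 * pi * hb)) ^ CARD('k)) *
       (\<integral>s. constr_flow S hb s \<psi> l x \<partial>lborel)"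

definition phys_ip ::
  "(real^'k \<Rightarrow> real^'m \<Rightarrow> real) \<Rightarrow> real
    \<Rightarrow> (real^'k \<Rightarrow> real^'m \<Rightarrow> complex) \<Rightarrow> (real^'k \<Rightarrow> real^'m \<Rightarrow> complex) \<Rightarrow> complex" where
  "phys_ip S hb \<psi> \<phi> =
     (\<integral>p. cnj (\<psi> (fst p) (snd p)) * phys_proj S hb \<phi> (fst p) (snd p) \<partial>lborel)"

definition gauge_ok :: "(real^'k \<Rightarrow> real^'m \<Rightarrow> real^'k) \<Rightarrow> bool" where
  "gauge_ok G \<longleftrightarrow>
     (\<forall>x l. (\<lambda>l'. G l' x) differentiable (at l)) \<and>
     (\<forall>x. \<exists>!l. G l x = 0) \<and>
     (\<forall>x l. G l x = 0 \<longrightarrow> det (jac (\<lambda>l'. G l' x) l) \<noteq> 0)"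

text \<open>Matrix of commutators [G_K, C_I] = i hbar dG_K/dlambda^I
  (multiplication operators), row K, column I.\<close>
definition comm_mat ::
  "real \<Rightarrow> (real^'k \<Rightarrow> real^'m \<Rightarrow> real^'k) \<Rightarrow> real^'k \<Rightarrow> real^'m \<Rightarrow> complex^'k^'k" where
  "comm_mat hb G l x = (\<chi> K I. \<i> * complex_of_real hb * complex_of_real (jac (\<lambda>l'. G l' x) l $ K $ I))"

text \<open>Composition of the Dirac delta with a map F : R^k -> R^k having only
  regular zeros (pullback of delta): int d^k lambda prod_K delta(F_K(lambda)) f(lambda)
  = sum over zeros c of f(c)/|det dF(c)|.\<close>
definition delta_pull :: "(real^'k \<Rightarrow> real^'k) \<Rightarrow> (real^'k \<Rightarrow> complex) \<Rightarrow> complex" where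
  "delta_pull F f = (\<Sum>c\<in>{c. F c = 0}. f c / complex_of_real \<bar>det (jac F c)\<bar>)"

definition fp_ip ::
  "(real^'k \<Rightarrow> real^'m \<Rightarrow> real) \<Rightarrow> real \<Rightarrow> (real^'k \<Rightarrow> real^'m \<Rightarrow> real^'k)
    \<Rightarrow> (real^'k \<Rightarrow> real^'m \<Rightarrow> complex) \<Rightarrow> (real^'k \<Rightarrow> real^'m \<Rightarrow> complex) \<Rightarrow> complex" where
  "fp_ip S hb G \<psi> \<phi> =
     complex_of_real ((2 * pi) ^ CARD('k)) *
       (\<integral>x. delta_pull (\<lambda>l. G l x)
              (\<lambda>l. complex_of_real (cmod (det (comm_mat hb G l x)))
                    * cnj (phys_proj S hb \<psi> l x) * phys_proj S hb \<phi> l x) \<partial>lborel)"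

end

theory Submission
  imports Defs
begin

text \<open>Since C_I = exp(i S/hb) p_I exp(-i S/hb), the group average is an average over
  translations in \<open>\<lambda>\<close>.  By translation invariance of Lebesgue measure,
  psi_phys(l, x) = (2 pi hb)^-k exp(i S(l,x)/hb) Phi_psi(x) with
  Phi_psi(x) = int exp(-i S(s,x)/hb) psi(s,x) ds.  The phase cancels in
  conj(psi_phys) phi_phys, which is therefore independent of \<open>\<lambda>\<close>, and Fubini
  reduces the physical inner product to (2 pi hb)^-k int conj(Phi_psi) Phi_phi dx.
  In the Faddeev--Popov integral the delta function picks the unique gauge-fixing
  point \<open>\<lambda> = c(x)\<close>, where the weight |det [G,C]| / |det dG/d\<lambda>| = hb^k does
  not depend on \<open>G\<close>.\<close>

lemma integral_lborel_translate:
  fixes f :: "'a::euclidean_space \<Rightarrow> 'b::{banach, second_countable_topology}"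
  shows "(\<integral>s. f (l + s) \<partial>lborel) = (\<integral>s. f s \<partial>lborel)"
proof (cases "f \<in> borel_measurable borel")
  case True
  have "integral\<^sup>L (distr lborel borel ((+) l)) f = (\<integral>s. f (l + s) \<partial>lborel)"
    by (rule integral_distr) (auto simp: True)
  then show ?thesis by (simp add: lborel_distr_plus)
next
  case False
  have "(\<lambda>s. f (l + s)) \<notin> borel_measurable borel"
  proof
    assume "(\<lambda>s. f (l + s)) \<in> borel_measurable borel"
    then have "(\<lambda>t. f (l + (t - l))) \<in> borel_measurable borel"
      by (rule measurable_compose[rotated]) simp
    with False show False by simp
  qed
  then have "\<not> integrable lborel (\<lambda>s. f (l + s))" by auto
  moreover from False have "\<not> integrable lborel f" by auto
  ultimately show ?thesis by (simp add: not_integrable_integral_eq)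
qed

lemma det_of_real_matrix:
  "det (\<chi> i j. of_real (A $ i $ j) :: 'a::{real_algebra_1, comm_ring_1}^'n^'n) = of_real (det A)"
  unfolding det_def by simp

lemma delta_pull_unique_zero:
  assumes "{c. F c = 0} = {c\<^sub>0}"
  shows "delta_pull F f = f c\<^sub>0 / complex_of_real \<bar>det (jac F c\<^sub>0)\<bar>"
  unfolding delta_pull_def assms by simp

definition phys_amplitude ::
  "(real^'k \<Rightarrow> real^'m \<Rightarrow> real) \<Rightarrow> real
    \<Rightarrow> (real^'k \<Rightarrow> real^'m \<Rightarrow> complex) \<Rightarrow> real^'m \<Rightarrow> complex" where
  "phys_amplitude S hb \<phi> x = (\<integral>s. exp (- \<i> * complex_of_real (S s x / hb)) * \<phi> s x \<partial>lborel)"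

lemma phys_proj_eq_amplitude:
  "phys_proj S hb \<phi> l x = complex_of_real ((1 / (2 * pi * hb)) ^ CARD('k))
     * exp (\<i> * complex_of_real (S l x / hb)) * phys_amplitude S hb \<phi> x"
  for \<phi> :: "real^'k \<Rightarrow> real^'m \<Rightarrow> complex"
proof -
  define g where "g t = exp (- \<i> * complex_of_real (S t x / hb)) * \<phi> t x" for t
  have "(\<integral>s. constr_flow S hb s \<phi> l x \<partial>lborel)
      = (\<integral>s. exp (\<i> * complex_of_real (S l x / hb)) * g (l + s) \<partial>lborel)"
    unfolding constr_flow_def g_def by (simp add: mult.assoc)
  also have "\<dots> = exp (\<i> * complex_of_real (S l x / hb)) * (\<integral>s. g s \<partial>lborel)"
    by (simp add: integral_lborel_translate)
  finally show ?thesis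
    unfolding phys_proj_def phys_amplitude_def g_def by (simp add: mult.assoc)
qed

lemma cnj_phys_proj_mult:
  "cnj (phys_proj S hb \<psi> l x) * phys_proj S hb \<phi> l x
     = complex_of_real (((1 / (2 * pi * hb)) ^ CARD('k))\<^sup>2)
         * (cnj (phys_amplitude S hb \<psi> x) * phys_amplitude S hb \<phi> x)"
  for \<phi> \<psi> :: "real^'k \<Rightarrow> real^'m \<Rightarrow> complex"
proof -
  define E where "E = exp (\<i> * complex_of_real (S l x / hb))"
  have "cnj E * E = 1"
    unfolding E_def by (simp add: exp_cnj exp_add[symmetric])
  then show ?thesis
    unfolding phys_proj_eq_amplitude E_def[symmetric]
    by (simp add: power2_eq_square algebra_simps)
qed

lemma phys_ip_eq_amplitude_integral:
  fixes \<phi> \<psi> :: "real^'k \<Rightarrow> real^'m \<Rightarrow> complex"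
  assumes "integrable lborel
             (\<lambda>p. cnj (\<psi> (fst p) (snd p)) * phys_proj S hb \<phi> (fst p) (snd p))"
  shows "phys_ip S hb \<psi> \<phi> = complex_of_real ((1 / (2 * pi * hb)) ^ CARD('k))
           * (\<integral>x. cnj (phys_amplitude S hb \<psi> x) * phys_amplitude S hb \<phi> x \<partial>lborel)"
proof -
  define c where "c = complex_of_real ((1 / (2 * pi * hb)) ^ CARD('k))"
  define f where "f l x = cnj (\<psi> l x) * phys_proj S hb \<phi> l x" for l x
  have integrable_f: "integrable (lborel \<Otimes>\<^sub>M lborel) (case_prod f)"
    using assms unfolding f_def lborel_prod[symmetric] by (simp add: case_prod_beta')
  have "phys_ip S hb \<psi> \<phi> = integral\<^sup>L (lborel \<Otimes>\<^sub>M lborel) (case_prod f)"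
    unfolding phys_ip_def f_def lborel_prod by (simp add: case_prod_beta')
  also have "\<dots> = (\<integral>x. (\<integral>l. f l x \<partial>lborel) \<partial>lborel)"
    by (rule lborel_pair.integral_snd[OF integrable_f, symmetric])
  also have "\<dots> = (\<integral>x. c * (cnj (phys_amplitude S hb \<psi> x) * phys_amplitude S hb \<phi> x) \<partial>lborel)"
  proof (rule Bochner_Integration.integral_cong[OF refl])
    fix x
    have "(\<integral>l. f l x \<partial>lborel) = (\<integral>l. (c * phys_amplitude S hb \<phi> x) *
             cnj (exp (- \<i> * complex_of_real (S l x / hb)) * \<psi> l x) \<partial>lborel)"
      unfolding f_def phys_proj_eq_amplitude c_def[symmetric]
      by (rule Bochner_Integration.integral_cong[OF refl]) (simp add: exp_cnj algebra_simps)
    also have "\<dots> = c * (cnj (phys_amplitude S hb \<psi> x) * phys_amplitude S hb \<phi> x)"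
      unfolding phys_amplitude_def integral_mult_right_zero Bochner_Integration.integral_cnj
      by (simp add: algebra_simps)
    finally show "(\<integral>l. f l x \<partial>lborel) = c * (cnj (phys_amplitude S hb \<psi> x) * phys_amplitude S hb \<phi> x)" .
  qed
  finally show ?thesis unfolding c_def by simp
qed

lemma cmod_det_comm_mat:
  assumes "hb > 0"
  shows "cmod (det (comm_mat hb G l x :: complex^'k^'k))
           = hb ^ CARD('k) * \<bar>det (jac (\<lambda>l'. G l' x) l)\<bar>"
proof -
  have "comm_mat hb G l x = (\<chi> K. (\<i> * complex_of_real hb)
          *s (\<chi> I. complex_of_real (jac (\<lambda>l'. G l' x) l $ K $ I)))"
    unfolding comm_mat_def by (simp add: vec_eq_iff mult.assoc)
  then have "det (comm_mat hb G l x)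
      = (\<i> * complex_of_real hb) ^ CARD('k) * complex_of_real (det (jac (\<lambda>l'. G l' x) l))"
    by (simp add: det_rows_mul det_of_real_matrix[symmetric])
  with assms show ?thesis by (simp add: norm_mult norm_power)
qed

lemma fp_ip_eq_amplitude_integral:
  fixes \<phi> \<psi> :: "real^'k \<Rightarrow> real^'m \<Rightarrow> complex"
  assumes hb: "hb > 0" and G: "gauge_ok G"
  shows "fp_ip S hb G \<psi> \<phi> = complex_of_real ((1 / (2 * pi * hb)) ^ CARD('k))
           * (\<integral>x. cnj (phys_amplitude S hb \<psi> x) * phys_amplitude S hb \<phi> x \<partial>lborel)"
proof -
  define c where "c = (1 / (2 * pi * hb)) ^ CARD('k)"
  define Q where "Q x = cnj (phys_amplitude S hb \<psi> x) * phys_amplitude S hb \<phi> x" for x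
  have delta: "delta_pull (\<lambda>l. G l x)
          (\<lambda>l. complex_of_real (cmod (det (comm_mat hb G l x)))
                * cnj (phys_proj S hb \<psi> l x) * phys_proj S hb \<phi> l x)
        = complex_of_real (hb ^ CARD('k) * c\<^sup>2) * Q x" for x
  proof -
    obtain l\<^sub>0 where zeros: "{l. G l x = 0} = {l\<^sub>0}"
      using G unfolding gauge_ok_def by (metis (mono_tags) Collect_cong singleton_conv)
    then have "det (jac (\<lambda>l'. G l' x) l\<^sub>0) \<noteq> 0"
      using G unfolding gauge_ok_def by blast
    then show ?thesis
      unfolding delta_pull_unique_zero[OF zeros] mult.assoc cnj_phys_proj_mult cmod_det_comm_mat[OF hb] Q_def c_def
      by (simp add: field_simps)
  qed
  have "(2 * pi) ^ CARD('k) * (hb ^ CARD('k) * c\<^sup>2) = c"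
    using hb unfolding c_def by (simp add: power2_eq_square field_simps)
  then show ?thesis
    unfolding fp_ip_def delta Q_def[symmetric] c_def[symmetric]
    by (simp flip: of_real_mult)
qed

theorem lemma2:
  fixes S :: "real^'k \<Rightarrow> real^'m \<Rightarrow> real"
    and G :: "real^'k \<Rightarrow> real^'m \<Rightarrow> real^'k"
    and \<psi> \<phi> :: "real^'k \<Rightarrow> real^'m \<Rightarrow> complex"
    and hb :: real
  assumes hb: "hb > 0"
    and S_diff: "\<forall>p. (\<lambda>q. S (fst q) (snd q)) differentiable (at p)"
    and G_ok: "gauge_ok G"
    and psi_L2: "integrable lborel (\<lambda>p. (cmod (\<psi> (fst p) (snd p)))\<^sup>2)"
    and phi_L2: "integrable lborel (\<lambda>p. (cmod (\<phi> (fst p) (snd p)))\<^sup>2)"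
    and psi_L1: "integrable lborel (\<lambda>p. \<psi> (fst p) (snd p))"
    and phi_L1: "integrable lborel (\<lambda>p. \<phi> (fst p) (snd p))"
    and ip_int: "integrable lborel
                   (\<lambda>p. cnj (\<psi> (fst p) (snd p)) * phys_proj S hb \<phi> (fst p) (snd p))"
  shows "phys_ip S hb \<psi> \<phi> = fp_ip S hb G \<psi> \<phi>
    \<and> (\<forall>l. phys_ip S hb \<psi> \<phi> =
            complex_of_real ((2 * pi * hb) ^ CARD('k)) *
              (\<integral>x. cnj (phys_proj S hb \<psi> l x) * phys_proj S hb \<phi> l x \<partial>lborel))
    \<and> (\<forall>l l' x. cnj (phys_proj S hb \<psi> l x) * phys_proj S hb \<phi> l x
               = cnj (phys_proj S hb \<psi> l' x) * phys_proj S hb \<phi> l' x)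
    \<and> (\<forall>G'. gauge_ok G' \<longrightarrow> fp_ip S hb G' \<psi> \<phi> = fp_ip S hb G \<psi> \<phi>)"
proof -
  have prefactor: "complex_of_real ((2 * pi * hb) ^ CARD('k))
      * complex_of_real (((1 / (2 * pi * hb)) ^ CARD('k))\<^sup>2)
      = complex_of_real ((1 / (2 * pi * hb)) ^ CARD('k))"
    unfolding of_real_mult[symmetric] using hb
    by (simp add: power2_eq_square field_simps)
  have integrand_const: "(\<integral>x. cnj (phys_proj S hb \<psi> l x) * phys_proj S hb \<phi> l x \<partial>lborel)
      = complex_of_real (((1 / (2 * pi * hb)) ^ CARD('k))\<^sup>2)
          * (\<integral>x. cnj (phys_amplitude S hb \<psi> x) * phys_amplitude S hb \<phi> x \<partial>lborel)" for l
    by (simp only: cnj_phys_proj_mult integral_mult_right_zero)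
  have fixed_lambda: "phys_ip S hb \<psi> \<phi> = complex_of_real ((2 * pi * hb) ^ CARD('k)) *
          (\<integral>x. cnj (phys_proj S hb \<psi> l x) * phys_proj S hb \<phi> l x \<partial>lborel)" for l
    unfolding phys_ip_eq_amplitude_integral[OF ip_int] integrand_const mult.assoc[symmetric] prefactor ..
  have gauge_fixed: "phys_ip S hb \<psi> \<phi> = fp_ip S hb G' \<psi> \<phi>" if "gauge_ok G'" for G'
    unfolding phys_ip_eq_amplitude_integral[OF ip_int] fp_ip_eq_amplitude_integral[OF hb that] ..
  show ?thesis
    using gauge_fixed[OF G_ok] gauge_fixed fixed_lambda by (simp add: cnj_phys_proj_mult)
qed

end
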